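(* Assume the setting and regular conditions described in the context. Fix $0\le s<T$ such that $X_s$ has a positive probability density $p_s\in H^2_{\mathrm{loc}}(\mathbb{R}^d)$, assume $q(s,\cdot)\in C_c^1(\mathbb{R}^d)$ and $r(s,\cdot)\in C_c^2(\mathbb{R}^d)$, and let $v_s=\mathcal{L}^*_sp_s/p_s$, where $\mathcal{L}^*_su=-\sum_i\partial_i(q^i(s,\cdot)u)+\frac12\sum_{i,j}\partial_{ij}(r^{ij}(s,\cdot)u)$. Assume that there exists another function $\tilde v_s\in L^1(p_s)$ on $\mathbb{R}^d$ such that $$\mathbb{E}\,f(X_t)v_s(X_s)=\mathbb{E}\,f(X_t)\tilde v_s(X_s)\qquad\text{for all } f\in C_c^\infty(\mathbb{R}^d),\ s<t\le T.$$ Then $v_s=\tilde v_s$ almost everywhere.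
   Context: Setting: Fix $T>0$; $X$ solves $dX_t=b(t,X_t)dt+\sigma(t,X_t)dW_t$ in $\mathbb{R}^d$, $W$ an $n$-dimensional Brownian motion, $a=\sigma\sigma^T$, generator $\mathcal{A}_tf=\sum_ib^i\partial_if+\frac12\sum_{i,j}a^{ij}\partial_{ij}f$. Regular conditions: there are $\alpha\in(0,1)$, $\lambda,C>0$, $\eta:[0,T]\times\mathbb{R}^d\to\mathbb{R}$ with (a) for all $R>0$, $b,a$ are continuous on $[0,T]\times B_R$ ($B_R$ the open ball of radius $R$) with $\sup_{t\in[0,T]}\|b(t,\cdot)\|_{C^{3+\alpha}_b(B_R)}+\sup_t\|a(t,\cdot)\|_{C^{3+\alpha}_b(B_R)}<\infty$, where $\|u\|_{C^{3+\alpha}_b}$ is the sum of sup norms of derivatives of order $\le3$ plus $\alpha$-Hölder seminorms of third derivatives; (b) $\xi^Ta(t,x)\xi\ge\eta(t,x)|\xi|^2$, $\inf\eta\ge\lambda$; (c) $b(t,x)^Tx\le C\eta(1+|x|^2)$, $|a(t,x)x|+\mathrm{tr}\,a(t,x)\le C\eta(1+|x|^2)$; (d) $|D^\beta b|+|D^\beta a|\le C\eta$ for $1\le|\beta|\le3$; (e) some $\phi\in C^2(\mathbb{R}^d)$ with $\phi\to\infty$ at infinity satisfies $\mathcal{A}_t\phi\le C\phi$ on $[0,T]\times\mathbb{R}^d$. Perturbation data: $\bar b(t,h,x)$, $\bar a(t,h,x)$ on $[0,T]\times[-1,1]\times\mathbb{R}^d$, differentiable in $h$, with $\bar b(t,0,x)=b(t,x)$,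 $\bar a(t,0,x)=a(t,x)$; $q=\partial_h|_{h=0}\bar b$, $r=\partial_h|_{h=0}\bar a$. *)

theory Defs
  imports "HOL-Probability.Probability"
begin

definition partial_differentiable ::
  "'d::finite \<Rightarrow> (real^'d \<Rightarrow> 'b::real_normed_vector) \<Rightarrow> real^'d \<Rightarrow> bool" where
  "partial_differentiable i f x \<longleftrightarrow> (\<lambda>h. f (x + h *\<^sub>R axis i 1)) differentiable (at 0)"

definition pdiff ::
  "'d::finite \<Rightarrow> (real^'d \<Rightarrow> 'b::real_normed_vector) \<Rightarrow> real^'d \<Rightarrow> 'b" where
  "pdiff i f x = vector_derivative (\<lambda>h. f (x + h *\<^sub>R axis i 1)) (at 0)"

fun dpart :: "'d::finite list \<Rightarrow> (real^'d \<Rightarrow> 'b::real_normed_vector) \<Rightarrow> real^'d \<Rightarrow> 'b" where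
  "dpart [] f = f"
| "dpart (i # is) f = pdiff i (dpart is f)"

definition C_k_on :: "nat \<Rightarrow> (real^'d::finite) set \<Rightarrow> (real^'d \<Rightarrow> 'b::real_normed_vector) \<Rightarrow> bool" where
  "C_k_on k U f \<longleftrightarrow>
     (\<forall>is. length is < k \<longrightarrow> (\<forall>x\<in>U. \<forall>i. partial_differentiable i (dpart is f) x)) \<and>
     (\<forall>is. length is \<le> k \<longrightarrow> continuous_on U (dpart is f))"

definition C_inf :: "(real^'d::finite \<Rightarrow> 'b::real_normed_vector) \<Rightarrow> bool" where
  "C_inf f \<longleftrightarrow> (\<forall>k. C_k_on k UNIV f)"

definition compact_support :: "(real^'d::finite \<Rightarrow> 'b::real_normed_vector) \<Rightarrow> bool" where
  "compact_support f \<longleftrightarrow> bounded {x. f x \<noteq> 0}"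

definition test_fun :: "(real^'d::finite \<Rightarrow> real) \<Rightarrow> bool" where
  "test_fun f \<longleftrightarrow> C_inf f \<and> compact_support f"

definition C_c :: "nat \<Rightarrow> (real^'d::finite \<Rightarrow> 'b::real_normed_vector) \<Rightarrow> bool" where
  "C_c k f \<longleftrightarrow> C_k_on k UNIV f \<and> compact_support f"

definition unif_C3alpha_ball ::
  "real \<Rightarrow> real \<Rightarrow> real \<Rightarrow> (real \<Rightarrow> real^'d::finite \<Rightarrow> 'b::real_normed_vector) \<Rightarrow> bool" where
  "unif_C3alpha_ball \<alpha> T R g \<longleftrightarrow>
     (\<forall>t\<in>{0..T}. C_k_on 3 (ball 0 R) (g t)) \<and>
     (\<exists>K. \<forall>t\<in>{0..T}. \<forall>x\<in>ball 0 R. \<forall>is. length is \<le> 3 \<longrightarrow> norm (dpart is (g t) x) \<le> K) \<and>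
     (\<exists>H. \<forall>t\<in>{0..T}. \<forall>x\<in>ball 0 R. \<forall>y\<in>ball 0 R. \<forall>is. length is = 3 \<longrightarrow>
          norm (dpart is (g t) x - dpart is (g t) y) \<le> H * dist x y powr \<alpha>)"

definition generator ::
  "(real \<Rightarrow> real^'d \<Rightarrow> real^'d) \<Rightarrow> (real \<Rightarrow> real^'d \<Rightarrow> real^'d^'d) \<Rightarrow> real
     \<Rightarrow> (real^'d::finite \<Rightarrow> real) \<Rightarrow> real^'d \<Rightarrow> real" where
  "generator b a t f x =
     (\<Sum>i\<in>UNIV. b t x $ i * dpart [i] f x)
     + 1/2 * (\<Sum>i\<in>UNIV. \<Sum>j\<in>UNIV. a t x $ i $ j * dpart [i, j] f x)"

definition regular_conditions ::
  "real \<Rightarrow> (real \<Rightarrow> real^'d \<Rightarrow> real^'d) \<Rightarrow> (real \<Rightarrow> real^'d \<Rightarrow> real^'d^'d)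
     \<Rightarrow> real \<Rightarrow> real \<Rightarrow> real \<Rightarrow> (real \<Rightarrow> real^'d::finite \<Rightarrow> real) \<Rightarrow> bool" where
  "regular_conditions T b a \<alpha> lam C \<eta> \<longleftrightarrow>
     0 < \<alpha> \<and> \<alpha> < 1 \<and> 0 < lam \<and> 0 < C \<and>
     \<comment> \<open>(a)\<close>
     (\<forall>R>0. continuous_on ({0..T} \<times> ball 0 R) (\<lambda>(t, x). b t x) \<and>
            continuous_on ({0..T} \<times> ball 0 R) (\<lambda>(t, x). a t x) \<and>
            unif_C3alpha_ball \<alpha> T R b \<and> unif_C3alpha_ball \<alpha> T R a) \<and>
     \<comment> \<open>(b)\<close>
     (\<forall>t\<in>{0..T}. \<forall>x \<xi>. \<xi> \<bullet> (a t x *v \<xi>) \<ge> \<eta> t x * (norm \<xi>)\<^sup>2) \<and>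
     (\<forall>t\<in>{0..T}. \<forall>x. \<eta> t x \<ge> lam) \<and>
     \<comment> \<open>(c)\<close>
     (\<forall>t\<in>{0..T}. \<forall>x. b t x \<bullet> x \<le> C * \<eta> t x * (1 + (norm x)\<^sup>2)) \<and>
     (\<forall>t\<in>{0..T}. \<forall>x. norm (a t x *v x) + trace (a t x) \<le> C * \<eta> t x * (1 + (norm x)\<^sup>2)) \<and>
     \<comment> \<open>(d)\<close>
     (\<forall>t\<in>{0..T}. \<forall>x. \<forall>is. 1 \<le> length is \<and> length is \<le> 3 \<longrightarrow>
          norm (dpart is (b t) x) + norm (dpart is (a t) x) \<le> C * \<eta> t x) \<and>
     \<comment> \<open>(e)\<close>
     (\<exists>\<phi>::real^'d \<Rightarrow> real. C_k_on 2 UNIV \<phi> \<and> filterlim \<phi> at_top at_infinity \<and>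
          (\<forall>t\<in>{0..T}. \<forall>x. generator b a t \<phi> x \<le> C * \<phi> x))"

section \<open>Solution of the SDE, in the form of the (Stroock--Varadhan) martingale problem\<close>

definition solves_martingale_problem ::
  "'w measure \<Rightarrow> (real \<Rightarrow> 'w measure) \<Rightarrow> (real \<Rightarrow> 'w \<Rightarrow> real^'d::finite)
     \<Rightarrow> (real \<Rightarrow> real^'d \<Rightarrow> real^'d) \<Rightarrow> (real \<Rightarrow> real^'d \<Rightarrow> real^'d^'d) \<Rightarrow> real \<Rightarrow> bool" where
  "solves_martingale_problem M F X b a T \<longleftrightarrow>
     prob_space M \<and>
     (\<forall>t\<in>{0..T}. subalgebra M (F t)) \<and>
     (\<forall>s t. 0 \<le> s \<longrightarrow> s \<le> t \<longrightarrow> t \<le> T \<longrightarrow> sets (F s) \<subseteq> sets (F t)) \<and>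
     (\<forall>t\<in>{0..T}. X t \<in> borel_measurable (F t)) \<and>
     (\<forall>\<omega>\<in>space M. continuous_on {0..T} (\<lambda>t. X t \<omega>)) \<and>
     (\<forall>f. test_fun f \<longrightarrow> (\<forall>s t. 0 \<le> s \<longrightarrow> s \<le> t \<longrightarrow> t \<le> T \<longrightarrow>
        (let Z = (\<lambda>\<omega>. f (X t \<omega>) - f (X s \<omega>) - integral {s..t} (\<lambda>u. generator b a u f (X u \<omega>)))
         in integrable M Z \<and> (AE \<omega> in M. real_cond_exp M (F s) Z \<omega> = 0))))"

definition loc_integrable :: "(real^'d::finite \<Rightarrow> real) \<Rightarrow> bool" where
  "loc_integrable f \<longleftrightarrow> f \<in> borel_measurable lborel \<and>
     (\<forall>K. compact K \<longrightarrow> set_integrable lborel K f)"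

definition L2_loc :: "(real^'d::finite \<Rightarrow> real) \<Rightarrow> bool" where
  "L2_loc f \<longleftrightarrow> f \<in> borel_measurable lborel \<and>
     (\<forall>K. compact K \<longrightarrow> set_integrable lborel K (\<lambda>x. (f x)\<^sup>2))"

definition weak_deriv :: "'d list \<Rightarrow> (real^'d::finite \<Rightarrow> real) \<Rightarrow> (real^'d \<Rightarrow> real) \<Rightarrow> bool" where
  "weak_deriv is f g \<longleftrightarrow> loc_integrable f \<and> loc_integrable g \<and>
     (\<forall>\<phi>. test_fun \<phi> \<longrightarrow>
        (\<integral>x. f x * dpart is \<phi> x \<partial>lborel) = (-1) ^ length is * (\<integral>x. g x * \<phi> x \<partial>lborel))"

definition H2_loc :: "(real^'d::finite \<Rightarrow> real) \<Rightarrow> bool" where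
  "H2_loc f \<longleftrightarrow> L2_loc f \<and> (\<forall>is. length is \<le> 2 \<longrightarrow> (\<exists>g. L2_loc g \<and> weak_deriv is f g))"

end

theory Submission
  imports Defs "HOL-Computational_Algebra.Polynomial"
begin

(* Since p > 0, it suffices to show that g = p (v - vt) vanishes almost everywhere.
   The weak derivatives w1, w2 of the compactly supported functions q p and r p vanish
   almost everywhere outside the support, so p v and hence g are Lebesgue integrable.
   Letting t decrease to s in the hypothesis, continuity of the paths and dominated
   convergence give E phi(X_s) v(X_s) = E phi(X_s) vt(X_s), i.e. the integral of g phi
   vanishes, for every smooth bump phi.  Tensor products of the bumps built from
   exp(-1/x) converge boundedly to indicators of open boxes, so g integrates to zero over
   every box, and Lebesgue's differentiation theorem yields g = 0 almost everywhere. *)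

section \<open>Infinitely differentiable functions of a real variable\<close>

definition infinitely_differentiable :: "(real \<Rightarrow> real) \<Rightarrow> bool" where
  "infinitely_differentiable f \<longleftrightarrow> (\<forall>n x. (deriv ^^ n) f differentiable (at x))"

lemma infinitely_differentiableI_deriv_closed:
  assumes "f \<in> S" and closed: "\<And>g. g \<in> S \<Longrightarrow> (\<forall>x. g differentiable (at x)) \<and> deriv g \<in> S"
  shows "infinitely_differentiable f"
proof -
  have "(deriv ^^ n) f \<in> S" for n
    by (induction n) (auto simp: assms(1) dest: closed)
  then show ?thesis
    unfolding infinitely_differentiable_def using closed by blast
qed

lemma infinitely_differentiable_has_deriv:
  "infinitely_differentiable f \<Longrightarrow> (f has_real_derivative deriv f x) (at x)"
  unfolding infinitely_differentiable_def
  by (metis DERIV_deriv_iff_real_differentiable funpow_0)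

lemma infinitely_differentiable_deriv:
  "infinitely_differentiable f \<Longrightarrow> infinitely_differentiable (deriv f)"
  unfolding infinitely_differentiable_def by (metis funpow_Suc_right comp_apply)

lemma infinitely_differentiable_higher_deriv:
  "infinitely_differentiable f \<Longrightarrow> infinitely_differentiable ((deriv ^^ n) f)"
  by (induction n) (auto simp: infinitely_differentiable_deriv)

lemma infinitely_differentiable_imp_continuous:
  "infinitely_differentiable f \<Longrightarrow> continuous_on UNIV f"
  by (meson DERIV_isCont continuous_at_imp_continuous_on infinitely_differentiable_has_deriv)

lemma higher_deriv_eq_0_on_open:
  assumes f: "infinitely_differentiable f" and "open V" "\<And>y. y \<in> V \<Longrightarrow> f y = 0" "y \<in> V"
  shows "(deriv ^^ n) f y = 0"
  using \<open>y \<in> V\<close>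
proof (induction n arbitrary: y)
  case 0
  then show ?case using assms by simp
next
  case (Suc n)
  have "((deriv ^^ n) f has_real_derivative 0) (at y)"
    by (rule has_field_derivative_transform_within_open[where S=V and f="\<lambda>_. 0"])
      (use Suc assms infinitely_differentiable_has_deriv[OF infinitely_differentiable_higher_deriv[OF f]] in auto)
  then show ?case by (simp add: DERIV_imp_deriv)
qed

lemma infinitely_differentiable_affine:
  assumes "infinitely_differentiable f"
  shows "infinitely_differentiable (\<lambda>x. f (c * x + e))"
proof -
  let ?S = "{\<lambda>x. k * g (c * x + e) | k g. infinitely_differentiable g}"
  have "(\<lambda>x. 1 * f (c * x + e)) \<in> ?S" using assms by blast
  moreover have "(\<forall>x. h differentiable (at x)) \<and> deriv h \<in> ?S" if "h \<in> ?S" for h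
  proof -
    obtain k g where h: "h = (\<lambda>x. k * g (c * x + e))" and g: "infinitely_differentiable g"
      using \<open>h \<in> ?S\<close> by blast
    have d: "(h has_real_derivative (k * c) * deriv g (c * x + e)) (at x)" for x
    proof -
      have "((\<lambda>x. c * x + e) has_real_derivative c) (at x)"
        using DERIV_add[OF DERIV_cmult[OF DERIV_ident, of c] DERIV_const[of e]] by simp
      from DERIV_cmult[OF DERIV_chain2[OF infinitely_differentiable_has_deriv[OF g] this], where c=k]
      show ?thesis unfolding h
        by (simp add: ac_simps)
    qed
    then have "deriv h = (\<lambda>x. (k * c) * deriv g (c * x + e))"
      by (auto intro!: DERIV_imp_deriv)
    then show ?thesis
      using d infinitely_differentiable_deriv[OF g] real_differentiable_def by blast
  qed
  ultimately have "infinitely_differentiable (\<lambda>x. 1 * f (c * x + e))"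
    by (rule infinitely_differentiableI_deriv_closed)
  then show ?thesis by simp
qed

(* This class is closed under deriv, which replaces the Leibniz formula. *)
inductive sum_of_smooth_products :: "(real \<Rightarrow> real) \<Rightarrow> bool" where
  product: "infinitely_differentiable u \<Longrightarrow> infinitely_differentiable w \<Longrightarrow>
    sum_of_smooth_products (\<lambda>x. u x * w x)"
| sum: "sum_of_smooth_products f \<Longrightarrow> sum_of_smooth_products g \<Longrightarrow>
    sum_of_smooth_products (\<lambda>x. f x + g x)"

lemma sum_of_smooth_products_deriv:
  assumes "sum_of_smooth_products h"
  shows "(\<forall>x. (h has_real_derivative deriv h x) (at x)) \<and> sum_of_smooth_products (deriv h)"
  using assms
proof induction
  case (product u w)
  have d: "((\<lambda>x. u x * w x) has_real_derivative deriv u x * w x + u x * deriv w x) (at x)" for x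
    using DERIV_mult[OF product[THEN infinitely_differentiable_has_deriv]] by (simp add: ac_simps)
  then have "deriv (\<lambda>x. u x * w x) = (\<lambda>x. deriv u x * w x + u x * deriv w x)"
    by (auto intro!: DERIV_imp_deriv)
  with d product show ?case
    by (auto intro!: sum_of_smooth_products.intros infinitely_differentiable_deriv)
next
  case (sum f g)
  then have d: "((\<lambda>x. f x + g x) has_real_derivative deriv f x + deriv g x) (at x)" for x
    by (auto intro!: DERIV_add)
  then have "deriv (\<lambda>x. f x + g x) = (\<lambda>x. deriv f x + deriv g x)"
    by (auto intro!: DERIV_imp_deriv)
  with d sum show ?case
    by (auto intro!: sum_of_smooth_products.sum)
qed

lemma infinitely_differentiable_mult:
  assumes "infinitely_differentiable f" "infinitely_differentiable g"
  shows "infinitely_differentiable (\<lambda>x. f x * g x)"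
proof (rule infinitely_differentiableI_deriv_closed[where S="Collect sum_of_smooth_products"])
  show "(\<lambda>x. f x * g x) \<in> Collect sum_of_smooth_products"
    using assms by (simp add: sum_of_smooth_products.product)
  show "(\<forall>x. h differentiable (at x)) \<and> deriv h \<in> Collect sum_of_smooth_products"
    if "h \<in> Collect sum_of_smooth_products" for h
    using sum_of_smooth_products_deriv[of h] that real_differentiable_def by auto
qed

definition exp_neg_recip :: "real \<Rightarrow> real" where
  "exp_neg_recip x = (if 0 < x then exp (- 1 / x) else 0)"

(* Every derivative of exp_neg_recip has this form. *)
definition exp_neg_recip_poly :: "real poly \<Rightarrow> real \<Rightarrow> real" where
  "exp_neg_recip_poly P x = (if 0 < x then poly P (1 / x) * exp (- 1 / x) else 0)"

lemma tendsto_poly_recip_exp_neg_recip: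
  "((\<lambda>x. poly P (1 / x) * exp (- 1 / x)) \<longlongrightarrow> (0::real)) (at_right 0)"
proof -
  have "((\<lambda>y. \<Sum>i\<le>degree P. coeff P i * (y ^ i / exp y)) \<longlongrightarrow> (\<Sum>i\<le>degree P. coeff P i * 0)) at_top"
    by (intro tendsto_intros tendsto_power_div_exp_0)
  moreover have "(\<lambda>y. \<Sum>i\<le>degree P. coeff P i * (y ^ i / exp y)) = (\<lambda>y. poly P y * exp (- y))"
    by (auto simp: poly_altdef sum_distrib_right exp_minus field_simps sum_divide_distrib)
  ultimately have "((\<lambda>y. poly P y * exp (- y)) \<longlongrightarrow> 0) at_top"
    by simp
  then show ?thesis
    unfolding filterlim_at_right_to_top by (simp add: divide_inverse)
qed

lemma exp_neg_recip_poly_has_deriv_pos: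
  assumes "0 < x"
  shows "(exp_neg_recip_poly P has_real_derivative exp_neg_recip_poly ([:0, 0, 1:] * (P - pderiv P)) x) (at x)"
proof -
  have "((\<lambda>x. poly P (1 / x) * exp (- 1 / x)) has_real_derivative
      poly (pderiv P) (1 / x) * (- 1 / x\<^sup>2) * exp (- 1 / x) + poly P (1 / x) * (exp (- 1 / x) * (1 / x\<^sup>2))) (at x)"
    using assms
    by (auto intro!: derivative_eq_intros DERIV_chain2[OF poly_DERIV] simp: power2_eq_square)
  also have "poly (pderiv P) (1 / x) * (- 1 / x\<^sup>2) * exp (- 1 / x) + poly P (1 / x) * (exp (- 1 / x) * (1 / x\<^sup>2))
      = exp_neg_recip_poly ([:0, 0, 1:] * (P - pderiv P)) x"
    using assms by (simp add: exp_neg_recip_poly_def algebra_simps power2_eq_square)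
  finally show ?thesis
    by (rule has_field_derivative_transform_within_open[where S="{0<..}"])
      (use assms in \<open>auto simp: exp_neg_recip_poly_def\<close>)
qed

lemma exp_neg_recip_poly_has_deriv:
  "(exp_neg_recip_poly P has_real_derivative exp_neg_recip_poly ([:0, 0, 1:] * (P - pderiv P)) x) (at x)"
proof -
  consider "0 < x" | "x < 0" | "x = 0" by linarith
  then show ?thesis
  proof cases
    case 1
    then show ?thesis by (rule exp_neg_recip_poly_has_deriv_pos)
  next
    case 2
    have "(exp_neg_recip_poly P has_real_derivative 0) (at x)"
      by (rule has_field_derivative_transform_within_open[where S="{..<0}" and f="\<lambda>_. 0"])
        (use 2 in \<open>auto simp: exp_neg_recip_poly_def\<close>)
    with 2 show ?thesis by (simp add: exp_neg_recip_poly_def)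
  next
    case 3
    have "((\<lambda>y. (exp_neg_recip_poly P y - exp_neg_recip_poly P 0) / (y - 0)) \<longlongrightarrow> 0) (at 0)"
    proof (rule filterlim_split_at)
      show "((\<lambda>y. (exp_neg_recip_poly P y - exp_neg_recip_poly P 0) / (y - 0)) \<longlongrightarrow> 0) (at_left 0)"
        by (rule tendsto_eventually)
          (auto simp: exp_neg_recip_poly_def eventually_at_left_field intro!: exI[of _ "-1"])
      \<comment> \<open>for \<open>y > 0\<close> the difference quotient is \<open>poly ([:0, 1:] * P) (1 / y) * exp (- 1 / y)\<close>\<close>
      show "((\<lambda>y. (exp_neg_recip_poly P y - exp_neg_recip_poly P 0) / (y - 0)) \<longlongrightarrow> 0) (at_right 0)"
        by (rule Lim_transform_eventually[OF tendsto_poly_recip_exp_neg_recip[of "[:0, 1:] * P"]])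
          (auto simp: exp_neg_recip_poly_def eventually_at_right_field intro!: exI[of _ 1])
    qed
    with 3 show ?thesis
      by (simp add: has_field_derivative_iff exp_neg_recip_poly_def)
  qed
qed

lemma infinitely_differentiable_exp_neg_recip: "infinitely_differentiable exp_neg_recip"
proof (rule infinitely_differentiableI_deriv_closed[where S="range exp_neg_recip_poly"])
  show "exp_neg_recip \<in> range exp_neg_recip_poly"
    by (rule range_eqI[of _ _ 1]) (simp add: exp_neg_recip_def exp_neg_recip_poly_def fun_eq_iff)
  show "(\<forall>x. f differentiable (at x)) \<and> deriv f \<in> range exp_neg_recip_poly"
    if "f \<in> range exp_neg_recip_poly" for f
  proof -
    from that obtain P where f: "f = exp_neg_recip_poly P" by blast
    then have "deriv f = exp_neg_recip_poly ([:0, 0, 1:] * (P - pderiv P))"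
      using exp_neg_recip_poly_has_deriv by (auto intro!: DERIV_imp_deriv)
    then show ?thesis
      using exp_neg_recip_poly_has_deriv f real_differentiable_def by blast
  qed
qed

lemma exp_neg_recip_eq_0: "x \<le> 0 \<Longrightarrow> exp_neg_recip x = 0"
  by (simp add: exp_neg_recip_def)

lemma exp_neg_recip_bounds: "0 \<le> exp_neg_recip x" "exp_neg_recip x \<le> 1"
  by (auto simp: exp_neg_recip_def)

lemma tendsto_exp_neg_recip_scaled:
  assumes "0 < c"
  shows "(\<lambda>n. exp_neg_recip (real (Suc n) * c)) \<longlonglongrightarrow> 1"
proof -
  have "(\<lambda>n. exp (- (1 / c) * inverse (real (Suc n)))) \<longlonglongrightarrow> exp (- (1 / c) * 0)"
    by (intro tendsto_intros LIMSEQ_inverse_real_of_nat)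
  moreover have "exp_neg_recip (real (Suc n) * c) = exp (- (1 / c) * inverse (real (Suc n)))" for n
    using assms by (simp add: exp_neg_recip_def field_simps add_pos_nonneg)
  ultimately show ?thesis by simp
qed

section \<open>Smooth bump functions on boxes\<close>

definition tensor_fun :: "('d::finite \<Rightarrow> real \<Rightarrow> real) \<Rightarrow> real^'d \<Rightarrow> real" where
  "tensor_fun G x = (\<Prod>k\<in>UNIV. G k (x $ k))"

lemma tensor_fun_partial_has_vector_derivative:
  assumes "\<And>k y. (G k has_real_derivative G' k y) (at y)"
  shows "((\<lambda>h. tensor_fun G (x + h *\<^sub>R axis i 1)) has_vector_derivative
           tensor_fun (\<lambda>k. if k = i then G' k else G k) x) (at 0)"
proof -
  let ?rest = "\<Prod>k\<in>UNIV-{i}. G k (x $ k)"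
  have split: "tensor_fun H (x + h *\<^sub>R axis i 1) = H i (x $ i + h) * (\<Prod>k\<in>UNIV-{i}. H k (x $ k))"
    for H h
    unfolding tensor_fun_def by (subst prod.remove[of UNIV i]) (auto simp: axis_def intro!: prod.cong)
  have "(\<Prod>k\<in>UNIV-{i}. (if k = i then G' k else G k) (x $ k)) = ?rest"
    by (rule prod.cong) auto
  then have "G' i (x $ i + 0) * 1 * ?rest = tensor_fun (\<lambda>k. if k = i then G' k else G k) x"
    using split[of "\<lambda>k. if k = i then G' k else G k" 0] by simp
  moreover have "((\<lambda>h. G i (x $ i + h) * ?rest) has_real_derivative G' i (x $ i + 0) * 1 * ?rest) (at 0)"
    by (intro DERIV_cmult_right DERIV_chain2[OF assms] derivative_eq_intros) auto
  ultimately show ?thesis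
    unfolding split has_real_derivative_iff_has_vector_derivative by metis
qed

lemma dpart_tensor_fun:
  assumes "\<And>k. infinitely_differentiable (G k)"
  shows "dpart is (tensor_fun G) = tensor_fun (\<lambda>k. (deriv ^^ count_list is k) (G k))"
proof (induction "is")
  case Nil
  then show ?case by simp
next
  case (Cons i "is")
  define H where "H = (\<lambda>k. (deriv ^^ count_list is k) (G k))"
  have H: "(H k has_real_derivative deriv (H k) y) (at y)" for k y
    unfolding H_def
    by (rule infinitely_differentiable_has_deriv[OF infinitely_differentiable_higher_deriv[OF assms]])
  have "dpart (i # is) (tensor_fun G) = pdiff i (tensor_fun H)"
    using Cons by (simp add: H_def)
  also have "\<dots> = tensor_fun (\<lambda>k. if k = i then deriv (H k) else H k)"
    unfolding pdiff_def
    by (rule ext, rule vector_derivative_at, rule tensor_fun_partial_has_vector_derivative[OF H])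
  also have "(\<lambda>k. if k = i then deriv (H k) else H k) = (\<lambda>k. (deriv ^^ count_list (i # is) k) (G k))"
    by (auto simp: H_def)
  finally show ?case .
qed

lemma continuous_on_tensor_fun:
  assumes "\<And>k. continuous_on UNIV (G k)"
  shows "continuous_on UNIV (tensor_fun G)"
proof -
  have "continuous_on UNIV (\<lambda>x. G k (x $ k))" for k
    by (rule continuous_on_compose2[OF assms]) (auto intro!: continuous_intros)
  then show ?thesis
    unfolding tensor_fun_def by (intro continuous_intros)
qed

lemma tensor_fun_eq_0:
  assumes "\<And>k y. y \<notin> {a $ k .. b $ k} \<Longrightarrow> G k y = 0" and "x \<notin> cbox a b"
  shows "tensor_fun G x = 0"
proof -
  obtain k where "x $ k \<notin> {a $ k .. b $ k}"
    using assms(2) by (auto simp: mem_box_cart)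
  then show ?thesis
    unfolding tensor_fun_def using assms(1) by (intro prod_zero) auto
qed

lemma dpart_tensor_fun_eq_0:
  assumes G: "\<And>k. infinitely_differentiable (G k)"
    and supp: "\<And>k y. y \<notin> {a $ k .. b $ k} \<Longrightarrow> G k y = 0" and "x \<notin> cbox a b"
  shows "dpart is (tensor_fun G) x = 0"
  unfolding dpart_tensor_fun[OF G]
proof (rule tensor_fun_eq_0[OF _ \<open>x \<notin> cbox a b\<close>])
  fix k y assume "y \<notin> {a $ k .. b $ k}"
  then show "(deriv ^^ count_list is k) (G k) y = 0"
    by (intro higher_deriv_eq_0_on_open[OF G, where V="{..<a $ k} \<union> {b $ k<..}"]) (auto simp: supp)
qed

lemma test_fun_tensor_fun:
  assumes G: "\<And>k. infinitely_differentiable (G k)"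
    and supp: "\<And>k y. y \<notin> {a $ k .. b $ k} \<Longrightarrow> G k y = 0"
  shows "test_fun (tensor_fun G)"
proof -
  have "C_k_on n UNIV (tensor_fun G)" for n
    unfolding C_k_on_def dpart_tensor_fun[OF G] partial_differentiable_def
  proof (intro conjI allI impI ballI)
    fix "is" :: "'a list" and x i
    show "(\<lambda>h. tensor_fun (\<lambda>k. (deriv ^^ count_list is k) (G k)) (x + h *\<^sub>R axis i 1)) differentiable (at 0)"
      by (rule differentiableI_vector, rule tensor_fun_partial_has_vector_derivative,
          rule infinitely_differentiable_has_deriv[OF infinitely_differentiable_higher_deriv[OF G]])
    show "continuous_on UNIV (tensor_fun (\<lambda>k. (deriv ^^ count_list is k) (G k)))"
      by (intro continuous_on_tensor_fun infinitely_differentiable_imp_continuous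
          infinitely_differentiable_higher_deriv G)
  qed
  moreover have "bounded {x. tensor_fun G x \<noteq> 0}"
    by (rule bounded_subset[OF bounded_cbox[of a b]]) (use tensor_fun_eq_0[OF supp] in fastforce)
  ultimately show ?thesis
    by (simp add: test_fun_def C_inf_def compact_support_def)
qed

lemma test_fun_imp_continuous: "test_fun f \<Longrightarrow> continuous_on UNIV f"
  unfolding test_fun_def C_inf_def C_k_on_def by (metis dpart.simps(1) le0 list.size(3))

definition bump_factor :: "nat \<Rightarrow> real \<Rightarrow> real \<Rightarrow> real \<Rightarrow> real" where
  "bump_factor n a b y = exp_neg_recip (real (Suc n) * (y - a)) * exp_neg_recip (real (Suc n) * (b - y))"

definition bump :: "nat \<Rightarrow> real^'d::finite \<Rightarrow> real^'d \<Rightarrow> real^'d \<Rightarrow> real" where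
  "bump n a b = tensor_fun (\<lambda>k. bump_factor n (a $ k) (b $ k))"

lemma infinitely_differentiable_bump_factor: "infinitely_differentiable (bump_factor n a b)"
proof -
  have "(\<lambda>y. real (Suc n) * (y - a)) = (\<lambda>y. real (Suc n) * y + - real (Suc n) * a)"
    "(\<lambda>y. real (Suc n) * (b - y)) = (\<lambda>y. - real (Suc n) * y + real (Suc n) * b)"
    by (auto simp: algebra_simps)
  then show ?thesis
    unfolding bump_factor_def
    by (metis infinitely_differentiable_mult infinitely_differentiable_affine
        infinitely_differentiable_exp_neg_recip)
qed

lemma bump_factor_eq_0: "y \<notin> {a <..< b} \<Longrightarrow> bump_factor n a b y = 0"
  by (auto simp: bump_factor_def exp_neg_recip_eq_0 mult_nonneg_nonpos)

lemma bump_factor_bounds: "0 \<le> bump_factor n a b y" "bump_factor n a b y \<le> 1"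
  unfolding bump_factor_def using exp_neg_recip_bounds by (auto intro: mult_le_one)

lemma tendsto_bump_factor: "y \<in> {a <..< b} \<Longrightarrow> (\<lambda>n. bump_factor n a b y) \<longlonglongrightarrow> 1"
  unfolding bump_factor_def
  using tendsto_mult[OF tendsto_exp_neg_recip_scaled[of "y - a"] tendsto_exp_neg_recip_scaled[of "b - y"]]
  by simp

lemma test_fun_bump: "test_fun (bump n a b)"
  unfolding bump_def
  by (rule test_fun_tensor_fun[where a=a and b=b, OF infinitely_differentiable_bump_factor bump_factor_eq_0])
    auto

lemma dpart_bump_eq_0: "x \<notin> cbox a b \<Longrightarrow> dpart is (bump n a b) x = 0"
  unfolding bump_def
  by (rule dpart_tensor_fun_eq_0[where a=a and b=b, OF infinitely_differentiable_bump_factor bump_factor_eq_0])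
    auto

lemma borel_measurable_bump[measurable]: "bump n a b \<in> borel_measurable borel"
  by (intro borel_measurable_continuous_onI test_fun_imp_continuous test_fun_bump)

lemma bump_bounds: "0 \<le> bump n a b x" "bump n a b x \<le> 1"
  unfolding bump_def tensor_fun_def using bump_factor_bounds
  by (auto intro: prod_nonneg prod_le_1)

lemma bump_eq_0:
  assumes "x \<notin> box a b"
  shows "bump n a b x = 0"
proof -
  obtain k where "x $ k \<notin> {a $ k <..< b $ k}"
    using assms by (auto simp: mem_box_cart)
  then show ?thesis
    unfolding bump_def tensor_fun_def by (intro prod_zero bexI[of _ k]) (auto simp: bump_factor_eq_0)
qed

lemma tendsto_bump: "x \<in> box a b \<Longrightarrow> (\<lambda>n. bump n a b x) \<longlonglongrightarrow> 1"
  unfolding bump_def tensor_fun_def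
  using tendsto_prod[of UNIV "\<lambda>k n. bump_factor n (a $ k) (b $ k) (x $ k)" "\<lambda>_. 1"]
  by (simp add: tendsto_bump_factor mem_box_cart)

section \<open>Integrals against bump functions determine a function\<close>

lemma set_integral_box_eq_0_if_bump_integrals_eq_0:
  fixes g :: "real^'d::finite \<Rightarrow> real"
  assumes [measurable]: "g \<in> borel_measurable lborel"
    and g: "set_integrable lborel (cbox a b) g"
    and zero: "\<And>n. (\<integral>x. g x * bump n a b x \<partial>lborel) = 0"
  shows "(LINT x : box a b | lborel. g x) = 0"
proof -
  have "(\<lambda>n. \<integral>x. g x * bump n a b x \<partial>lborel) \<longlonglongrightarrow> (\<integral>x. indicator (box a b) x *\<^sub>R g x \<partial>lborel)"
  proof (rule integral_dominated_convergence[where w="\<lambda>x. indicator (cbox a b) x * norm (g x)"])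
    have "integrable lborel (\<lambda>x. norm (indicator (cbox a b) x *\<^sub>R g x))"
      using g unfolding set_integrable_def by (rule integrable_norm)
    then show "integrable lborel (\<lambda>x. indicator (cbox a b) x * norm (g x))"
      by (simp add: abs_mult)
    show "AE x in lborel. (\<lambda>n. g x * bump n a b x) \<longlonglongrightarrow> indicator (box a b) x *\<^sub>R g x"
      using tendsto_mult[OF tendsto_const tendsto_bump]
      by (intro AE_I2) (auto simp: bump_eq_0 indicator_def)
    have "norm (g x * bump n a b x) \<le> indicator (cbox a b) x * norm (g x)" for n x
      using bump_bounds[of n a b x] bump_eq_0[of x a b n] box_subset_cbox[of a b]
      by (cases "x \<in> box a b") (auto simp: indicator_def abs_mult mult_left_le)
    then show "AE x in lborel. norm (g x * bump n a b x) \<le> indicator (cbox a b) x * norm (g x)" for n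
      by simp
  qed simp_all
  then show ?thesis
    by (simp add: zero set_lebesgue_integral_def LIMSEQ_const_iff)
qed

lemma negligible_nonzero_if_cbox_integrals_eq_0:
  fixes h :: "'a::euclidean_space \<Rightarrow> 'b::euclidean_space"
  assumes "\<And>u v. h integrable_on cbox u v" and zero: "\<And>u v. integral (cbox u v) h = 0"
  obtains N where "negligible N" "\<And>x. x \<notin> N \<Longrightarrow> h x = 0"
proof -
  obtain N where "negligible N" and N: "\<And>x e. x \<notin> N \<Longrightarrow> 0 < e \<Longrightarrow> \<exists>d>0. \<forall>t. 0 < t \<and> t < d \<longrightarrow>
      norm (integral (cbox x (x + t *\<^sub>R One)) h /\<^sub>R t ^ DIM('a) - h x) < e"
    using integrable_ccontinuous_explicit assms(1) by blast
  have "h x = 0" if x: "x \<notin> N" for x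
  proof (rule ccontr)
    assume "h x \<noteq> 0"
    then obtain d where "d > 0" and "\<forall>t. 0 < t \<and> t < d \<longrightarrow>
        norm (integral (cbox x (x + t *\<^sub>R One)) h /\<^sub>R t ^ DIM('a) - h x) < norm (h x)"
      using N[OF x, of "norm (h x)"] by auto
    then have "norm (integral (cbox x (x + (d/2) *\<^sub>R One)) h /\<^sub>R (d/2) ^ DIM('a) - h x) < norm (h x)"
      by auto
    then show False by (simp add: zero)
  qed
  with \<open>negligible N\<close> show ?thesis using that by blast
qed

lemma AE_eq_0_on_cbox_if_box_integrals_eq_0:
  fixes g :: "'a::euclidean_space \<Rightarrow> real"
  assumes g: "set_integrable lborel (cbox c d) g"
    and zero: "\<And>a b. cbox a b \<subseteq> cbox c d \<Longrightarrow> (LINT x : box a b | lborel. g x) = 0"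
  shows "AE x in lebesgue. x \<in> cbox c d \<longrightarrow> g x = 0"
proof -
  define h where "h x = (if x \<in> box c d then g x else 0)" for x
  have g_sub: "set_integrable lborel S g" if "S \<in> sets lborel" "S \<subseteq> cbox c d" for S
    by (rule set_integrable_subset[OF g that])
  have "g integrable_on box c d"
    using set_borel_integral_eq_integral(1)[OF g_sub[of "box c d"]] box_subset_cbox by auto
  then have "h integrable_on UNIV"
    unfolding h_def by (simp add: integrable_restrict_UNIV)
  then have h_int: "h integrable_on cbox u v" for u v
    by (rule integrable_on_subcbox) auto
  have h_zero: "integral (cbox u v) h = 0" for u v
  proof -
    obtain a b where ab: "box u v \<inter> box c d = box a b"
      using box_Int_box by blast
    have "integral (cbox u v) h = integral (box u v) h"
      by (simp add: integral_open_interval)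
    also have "\<dots> = integral UNIV (\<lambda>x. if x \<in> box u v then h x else 0)"
      by (simp add: integral_restrict_UNIV)
    also have "(\<lambda>x. if x \<in> box u v then h x else 0) = (\<lambda>x. if x \<in> box a b then g x else 0)"
      by (auto simp: h_def ab[symmetric])
    also have "integral UNIV \<dots> = integral (box a b) g"
      by (rule integral_restrict_UNIV)
    also have "\<dots> = (LINT x : box a b | lborel. g x)"
      using ab box_subset_cbox[of c d]
      by (intro set_borel_integral_eq_integral(2)[symmetric] g_sub) auto
    also have "\<dots> = 0"
    proof (cases "box a b = {}")
      case True
      then show ?thesis by (simp add: set_lebesgue_integral_def)
    next
      case False
      then have "cbox a b = closure (box a b)"
        by (simp add: closure_box)
      also have "\<dots> \<subseteq> cbox c d"
        using ab box_subset_cbox[of c d] by (intro closure_minimal) auto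
      finally show ?thesis by (rule zero)
    qed
    finally show ?thesis .
  qed
  obtain N where N: "negligible N" "\<And>x. x \<notin> N \<Longrightarrow> h x = 0"
    using negligible_nonzero_if_cbox_integrals_eq_0[OF h_int h_zero] by blast
  have "AE x in lebesgue. x \<in> box c d \<longrightarrow> g x = 0"
    by (rule AE_I'[of N]) (use N in \<open>simp add: negligible_iff_null_sets, force simp: h_def\<close>)
  moreover have "AE x in lebesgue. x \<notin> cbox c d - box c d"
    using negligible_frontier_interval[of c d] by (intro AE_not_in) (simp add: negligible_iff_null_sets)
  ultimately show ?thesis
    by eventually_elim auto
qed

lemma AE_eq_0_if_bump_integrals_eq_0:
  fixes g :: "real^'d::finite \<Rightarrow> real"
  assumes "open U" and [measurable]: "g \<in> borel_measurable lborel"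
    and g: "\<And>K. compact K \<Longrightarrow> K \<subseteq> U \<Longrightarrow> set_integrable lborel K g"
    and zero: "\<And>n a b. cbox a b \<subseteq> U \<Longrightarrow> (\<integral>x. g x * bump n a b x \<partial>lborel) = 0"
  shows "AE x in lborel. x \<in> U \<longrightarrow> g x = 0"
proof -
  obtain \<D> where \<D>: "countable \<D>" "\<D> \<subseteq> Pow U" "\<And>X. X \<in> \<D> \<Longrightarrow> \<exists>a b. X = cbox a b" "\<Union>\<D> = U"
    using open_countable_Union_open_cbox[OF \<open>open U\<close>] by metis
  have "AE x in lebesgue. x \<in> X \<longrightarrow> g x = 0" if "X \<in> \<D>" for X
  proof -
    obtain c d where X: "X = cbox c d"
      using \<D>(3) \<open>X \<in> \<D>\<close> by blast
    with \<D>(2) that have "cbox c d \<subseteq> U" by blast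
    then show ?thesis
      unfolding X using g zero
      by (intro AE_eq_0_on_cbox_if_box_integrals_eq_0 set_integral_box_eq_0_if_bump_integrals_eq_0)
        (auto intro: order_trans)
  qed
  then have "AE x in lebesgue. \<forall>X\<in>\<D>. x \<in> X \<longrightarrow> g x = 0"
    by (subst AE_ball_countable[OF \<D>(1)]) blast
  then have "AE x in lebesgue. x \<in> U \<longrightarrow> g x = 0"
    by eventually_elim (use \<D>(4) in auto)
  then show ?thesis
    by (simp add: AE_completion_iff)
qed

lemma integrable_weak_deriv_if_compact_support:
  assumes wd: "weak_deriv is f g" and "compact K" and supp: "\<And>x. x \<notin> K \<Longrightarrow> f x = 0"
  shows "integrable lborel g"
proof -
  have g: "loc_integrable g"
    using wd by (simp add: weak_deriv_def)
  then have [measurable]: "g \<in> borel_measurable lborel"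
    by (simp add: loc_integrable_def)
  have g_outside: "AE x in lborel. x \<in> - K \<longrightarrow> g x = 0"
  proof (rule AE_eq_0_if_bump_integrals_eq_0)
    show "open (- K)"
      using \<open>compact K\<close> by (simp add: compact_imp_closed open_Compl)
    show "set_integrable lborel K' g" if "compact K'" "K' \<subseteq> - K" for K'
      using g that by (simp add: loc_integrable_def)
    fix n a b assume ab: "cbox a b \<subseteq> - K"
    have "(\<lambda>x. f x * dpart is (bump n a b) x) = (\<lambda>x. 0)"
      using ab supp dpart_bump_eq_0 by fastforce
    moreover have "(\<integral>x. f x * dpart is (bump n a b) x \<partial>lborel) =
        (-1) ^ length is * (\<integral>x. g x * bump n a b x \<partial>lborel)"
      using wd test_fun_bump unfolding weak_deriv_def by blast
    ultimately have "(-1) ^ length is * (\<integral>x. g x * bump n a b x \<partial>lborel) = 0"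
      by simp
    then show "(\<integral>x. g x * bump n a b x \<partial>lborel) = 0"
      by simp
  qed measurable
  have "integrable lborel (\<lambda>x. indicator K x *\<^sub>R g x)"
    using g \<open>compact K\<close> by (simp add: loc_integrable_def set_integrable_def)
  then show ?thesis
    by (rule integrable_cong_AE_imp) (use g_outside in \<open>auto elim!: eventually_mono simp: indicator_def\<close>)
qed

lemma integrable_weak_deriv_if_C_c_factor:
  assumes "weak_deriv is f g" and "C_c k c" and "\<And>x. c x = 0 \<Longrightarrow> f x = 0"
  shows "integrable lborel g"
proof (rule integrable_weak_deriv_if_compact_support[OF assms(1)])
  show "compact (closure {x. c x \<noteq> 0})"
    using assms(2) by (simp add: C_c_def compact_support_def compact_closure)
  show "f x = 0" if "x \<notin> closure {x. c x \<noteq> 0}" for x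
    using that closure_subset[of "{x. c x \<noteq> 0}"] assms(3) by auto
qed

lemma integrable_density_divide:
  fixes f p :: "'a \<Rightarrow> real"
  assumes "p \<in> borel_measurable M" "\<And>x. 0 < p x" "integrable M f"
  shows "integrable (density M (\<lambda>x. ennreal (p x))) (\<lambda>x. f x / p x)"
proof -
  have "(\<lambda>x. p x * (f x / p x)) = f"
    using assms(2) by (auto simp: fun_eq_iff less_imp_neq[symmetric])
  then show ?thesis
    using assms by (subst integrable_density) (auto simp: less_imp_le)
qed

lemma integrable_bounded_mult:
  fixes f g :: "'a \<Rightarrow> real"
  assumes "integrable M f" "g \<in> borel_measurable M" "\<And>x. \<bar>g x\<bar> \<le> 1"
  shows "integrable M (\<lambda>x. g x * f x)"
  by (rule Bochner_Integration.integrable_bound[OF integrable_norm[OF assms(1)]])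
    (use assms in \<open>auto simp: abs_mult intro!: mult_left_le_one_le\<close>)

lemma AE_eq_if_density_bump_integrals_eq:
  fixes p v vt :: "real^'d::finite \<Rightarrow> real"
  defines "\<mu> \<equiv> density lborel (\<lambda>x. ennreal (p x))"
  assumes [measurable]: "p \<in> borel_measurable lborel" "v \<in> borel_measurable lborel"
      "vt \<in> borel_measurable lborel"
    and p_pos: "\<And>x. 0 < p x" and v: "integrable \<mu> v" and vt: "integrable \<mu> vt"
    and eq: "\<And>n a b. (\<integral>x. bump n a b x * v x \<partial>\<mu>) = (\<integral>x. bump n a b x * vt x \<partial>\<mu>)"
  shows "AE x in lborel. v x = vt x"
proof -
  have p_nonneg: "\<And>x. 0 \<le> p x"
    using p_pos less_imp_le by blast
  have bounded_bump: "\<bar>bump n a b x\<bar> \<le> 1" for n a b x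
    using bump_bounds[of n a b x] by simp
  have "integrable \<mu> (\<lambda>x. v x - vt x)"
    using v vt by (rule Bochner_Integration.integrable_diff)
  then have g: "integrable lborel (\<lambda>x. p x * (v x - vt x))"
    unfolding \<mu>_def using p_nonneg by (simp add: integrable_density)
  have "AE x in lborel. x \<in> UNIV \<longrightarrow> p x * (v x - vt x) = 0"
  proof (rule AE_eq_0_if_bump_integrals_eq_0)
    show "set_integrable lborel K (\<lambda>x. p x * (v x - vt x))" if "compact K" for K
      unfolding set_integrable_def using that g by (intro integrable_mult_indicator) (auto intro: borel_compact)
    fix n a b
    have "(\<integral>x. p x * (v x - vt x) * bump n a b x \<partial>lborel) = (\<integral>x. bump n a b x * v x - bump n a b x * vt x \<partial>\<mu>)"
      unfolding \<mu>_def using p_nonneg by (subst integral_density) (simp_all add: algebra_simps)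
    also have "\<dots> = 0"
    proof -
      have "bump n a b \<in> borel_measurable \<mu>"
        unfolding \<mu>_def by simp
      then show ?thesis
        using eq integrable_bounded_mult[OF v _ bounded_bump] integrable_bounded_mult[OF vt _ bounded_bump]
        by (subst Bochner_Integration.integral_diff) auto
    qed
    finally show "(\<integral>x. p x * (v x - vt x) * bump n a b x \<partial>lborel) = 0" .
  qed auto
  then show ?thesis
    by eventually_elim (use p_pos in \<open>auto simp: less_imp_neq[symmetric]\<close>)
qed

section \<open>Passing to the limit along continuous paths\<close>

lemma tendsto_integral_continuous_paths:
  fixes X :: "real \<Rightarrow> 'w \<Rightarrow> 'a::topological_space" and \<phi> :: "'a \<Rightarrow> real"
  assumes paths: "\<forall>\<omega>\<in>space M. continuous_on {0..T} (\<lambda>t. X t \<omega>)"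
    and X: "\<And>t. t \<in> {0..T} \<Longrightarrow> X t \<in> borel_measurable M"
    and \<phi>: "continuous_on UNIV \<phi>" "\<And>x. \<bar>\<phi> x\<bar> \<le> 1" and H: "integrable M H"
    and t: "\<And>k. t k \<in> {0..T}" "t \<longlonglongrightarrow> s" and s: "s \<in> {0..T}"
  shows "(\<lambda>k. \<integral>\<omega>. \<phi> (X (t k) \<omega>) * H \<omega> \<partial>M) \<longlonglongrightarrow> (\<integral>\<omega>. \<phi> (X s \<omega>) * H \<omega> \<partial>M)"
proof (rule integral_dominated_convergence[where w="\<lambda>\<omega>. norm (H \<omega>)"])
  note [measurable] = borel_measurable_continuous_onI[OF \<phi>(1)] borel_measurable_integrable[OF H]
  show "(\<lambda>\<omega>. \<phi> (X s \<omega>) * H \<omega>) \<in> borel_measurable M"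
    using X[OF s] by measurable
  show "(\<lambda>\<omega>. \<phi> (X (t k) \<omega>) * H \<omega>) \<in> borel_measurable M" for k
    using X[OF t(1)[of k]] by measurable
  show "integrable M (\<lambda>\<omega>. norm (H \<omega>))"
    using H by (rule integrable_norm)
  show "AE \<omega> in M. (\<lambda>k. \<phi> (X (t k) \<omega>) * H \<omega>) \<longlonglongrightarrow> \<phi> (X s \<omega>) * H \<omega>"
  proof (rule AE_I2)
    fix \<omega> assume "\<omega> \<in> space M"
    then have "(\<lambda>k. X (t k) \<omega>) \<longlonglongrightarrow> X s \<omega>"
      by (intro continuous_on_tendsto_compose[OF paths[rule_format] t(2) s]) (use t(1) in auto)
    then have "(\<lambda>k. \<phi> (X (t k) \<omega>)) \<longlonglongrightarrow> \<phi> (X s \<omega>)"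
      by (rule continuous_on_tendsto_compose[OF \<phi>(1)]) auto
    then show "(\<lambda>k. \<phi> (X (t k) \<omega>) * H \<omega>) \<longlonglongrightarrow> \<phi> (X s \<omega>) * H \<omega>"
      by (intro tendsto_intros)
  qed
  show "AE \<omega> in M. norm (\<phi> (X (t k) \<omega>) * H \<omega>) \<le> norm (H \<omega>)" for k
    using \<phi>(2) by (intro AE_I2) (simp add: abs_mult mult_left_le_one_le)
qed

lemma integral_eq_at_left_endpoint:
  fixes X :: "real \<Rightarrow> 'w \<Rightarrow> 'a::topological_space" and \<phi> :: "'a \<Rightarrow> real"
  assumes paths: "\<forall>\<omega>\<in>space M. continuous_on {0..T} (\<lambda>t. X t \<omega>)"
    and X: "\<And>t. t \<in> {0..T} \<Longrightarrow> X t \<in> borel_measurable M"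
    and \<phi>: "continuous_on UNIV \<phi>" "\<And>x. \<bar>\<phi> x\<bar> \<le> 1"
    and H: "integrable M H" "integrable M H'" and s: "0 \<le> s" "s < T"
    and eq: "\<And>t. s < t \<Longrightarrow> t \<le> T \<Longrightarrow> (\<integral>\<omega>. \<phi> (X t \<omega>) * H \<omega> \<partial>M) = (\<integral>\<omega>. \<phi> (X t \<omega>) * H' \<omega> \<partial>M)"
  shows "(\<integral>\<omega>. \<phi> (X s \<omega>) * H \<omega> \<partial>M) = (\<integral>\<omega>. \<phi> (X s \<omega>) * H' \<omega> \<partial>M)"
proof -
  define t where "t = (\<lambda>k. s + (T - s) / real (Suc k))"
  have t_range: "s < t k" "t k \<le> T" for k
    using s divide_left_mono[of 1 "real (Suc k)" "T - s"] by (auto simp: t_def)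
  have "(\<lambda>k. s + (T - s) * inverse (real (Suc k))) \<longlonglongrightarrow> s + (T - s) * 0"
    by (intro tendsto_intros LIMSEQ_inverse_real_of_nat)
  then have "t \<longlonglongrightarrow> s"
    by (simp add: t_def divide_inverse)
  moreover have "t k \<in> {0..T}" for k
    using t_range[of k] s by auto
  moreover have "s \<in> {0..T}"
    using s by auto
  ultimately have "(\<lambda>k. \<integral>\<omega>. \<phi> (X (t k) \<omega>) * H \<omega> \<partial>M) \<longlonglongrightarrow> (\<integral>\<omega>. \<phi> (X s \<omega>) * H \<omega> \<partial>M)"
    and "(\<lambda>k. \<integral>\<omega>. \<phi> (X (t k) \<omega>) * H' \<omega> \<partial>M) \<longlonglongrightarrow> (\<integral>\<omega>. \<phi> (X s \<omega>) * H' \<omega> \<partial>M)"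
    using tendsto_integral_continuous_paths[OF paths X \<phi> H(1)] tendsto_integral_continuous_paths[OF paths X \<phi> H(2)]
    by blast+
  then show ?thesis
    unfolding eq[OF t_range] by (rule LIMSEQ_unique)
qed

lemma solves_martingale_problem_paths:
  assumes "solves_martingale_problem M F X b a T"
  shows "\<forall>\<omega>\<in>space M. continuous_on {0..T} (\<lambda>t. X t \<omega>)"
    and "\<And>t. t \<in> {0..T} \<Longrightarrow> X t \<in> borel_measurable M"
proof -
  have "\<forall>t\<in>{0..T}. subalgebra M (F t)" "\<forall>t\<in>{0..T}. X t \<in> borel_measurable (F t)"
    and "\<forall>\<omega>\<in>space M. continuous_on {0..T} (\<lambda>t. X t \<omega>)"
    using assms unfolding solves_martingale_problem_def by auto
  then show "\<forall>\<omega>\<in>space M. continuous_on {0..T} (\<lambda>t. X t \<omega>)"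
    and "\<And>t. t \<in> {0..T} \<Longrightarrow> X t \<in> borel_measurable M"
    using measurable_from_subalg by blast+
qed

lemma integral_density_eq_at_left_endpoint:
  fixes X :: "real \<Rightarrow> 'w \<Rightarrow> real^'d::finite" and \<phi> h h' p :: "real^'d \<Rightarrow> real"
  defines "\<mu> \<equiv> density lborel (\<lambda>x. ennreal (p x))"
  assumes paths: "\<forall>\<omega>\<in>space M. continuous_on {0..T} (\<lambda>t. X t \<omega>)"
    and X: "\<And>t. t \<in> {0..T} \<Longrightarrow> X t \<in> borel_measurable M"
    and s: "0 \<le> s" "s < T" and density: "distr M lborel (X s) = \<mu>"
    and \<phi>: "continuous_on UNIV \<phi>" "\<And>x. \<bar>\<phi> x\<bar> \<le> 1"
    and [measurable]: "h \<in> borel_measurable lborel" "h' \<in> borel_measurable lborel"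
    and h: "integrable \<mu> h" "integrable \<mu> h'"
    and eq: "\<And>t. s < t \<Longrightarrow> t \<le> T \<Longrightarrow>
      (\<integral>\<omega>. \<phi> (X t \<omega>) * h (X s \<omega>) \<partial>M) = (\<integral>\<omega>. \<phi> (X t \<omega>) * h' (X s \<omega>) \<partial>M)"
  shows "(\<integral>x. \<phi> x * h x \<partial>\<mu>) = (\<integral>x. \<phi> x * h' x \<partial>\<mu>)"
proof -
  have Xs: "X s \<in> measurable M lborel"
    using X s by simp
  have [measurable]: "\<phi> \<in> borel_measurable lborel"
    using borel_measurable_continuous_onI[OF \<phi>(1)] by simp
  have integral_comp: "(\<integral>x. g x \<partial>\<mu>) = (\<integral>\<omega>. g (X s \<omega>) \<partial>M)"
    and integrable_comp: "integrable \<mu> g \<Longrightarrow> integrable M (\<lambda>\<omega>. g (X s \<omega>))"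
    if "g \<in> borel_measurable lborel" for g :: "real^'d \<Rightarrow> real"
    using integral_distr[OF Xs that] integrable_distr_eq[OF Xs that] by (simp_all add: density)
  have "(\<integral>\<omega>. \<phi> (X s \<omega>) * h (X s \<omega>) \<partial>M) = (\<integral>\<omega>. \<phi> (X s \<omega>) * h' (X s \<omega>) \<partial>M)"
    by (rule integral_eq_at_left_endpoint[OF paths X \<phi> integrable_comp integrable_comp s eq]) (use h in auto)
  then show ?thesis
    by (simp add: integral_comp)
qed

theorem theorem3p12:
  fixes T s :: real
    and b :: "real \<Rightarrow> real^'d::finite \<Rightarrow> real^'d"
    and \<sigma> :: "real \<Rightarrow> real^'d \<Rightarrow> real^'n::finite^'d"
    and \<alpha> lam C :: real and \<eta> :: "real \<Rightarrow> real^'d \<Rightarrow> real"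
    and M :: "'w measure" and F :: "real \<Rightarrow> 'w measure" and X :: "real \<Rightarrow> 'w \<Rightarrow> real^'d"
    and bbar :: "real \<Rightarrow> real \<Rightarrow> real^'d \<Rightarrow> real^'d"
    and abar :: "real \<Rightarrow> real \<Rightarrow> real^'d \<Rightarrow> real^'d^'d"
    and q :: "real \<Rightarrow> real^'d \<Rightarrow> real^'d" and r :: "real \<Rightarrow> real^'d \<Rightarrow> real^'d^'d"
    and p :: "real^'d \<Rightarrow> real"
    and w1 :: "'d \<Rightarrow> real^'d \<Rightarrow> real" and w2 :: "'d \<Rightarrow> 'd \<Rightarrow> real^'d \<Rightarrow> real"
    and v vt :: "real^'d \<Rightarrow> real"
  defines "a \<equiv> (\<lambda>t x. \<sigma> t x ** transpose (\<sigma> t x))"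
  assumes T_pos: "0 < T"
    and regular: "regular_conditions T b a \<alpha> lam C \<eta>"
    and sde: "solves_martingale_problem M F X b a T"
    and bbar_diff: "\<forall>t\<in>{0..T}. \<forall>x. \<forall>h\<in>{-1..1}. (\<lambda>h. bbar t h x) differentiable (at h within {-1..1})"
    and abar_diff: "\<forall>t\<in>{0..T}. \<forall>x. \<forall>h\<in>{-1..1}. (\<lambda>h. abar t h x) differentiable (at h within {-1..1})"
    and bbar0: "\<forall>t\<in>{0..T}. \<forall>x. bbar t 0 x = b t x"
    and abar0: "\<forall>t\<in>{0..T}. \<forall>x. abar t 0 x = a t x"
    and q_def: "\<forall>t\<in>{0..T}. \<forall>x. ((\<lambda>h. bbar t h x) has_vector_derivative q t x) (at 0 within {-1..1})"
    and r_def: "\<forall>t\<in>{0..T}. \<forall>x. ((\<lambda>h. abar t h x) has_vector_derivative r t x) (at 0 within {-1..1})"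
    and s_range: "0 \<le> s" "s < T"
    and p_meas: "p \<in> borel_measurable lborel"
    and p_density: "distr M lborel (X s) = density lborel (\<lambda>x. ennreal (p x))"
    and p_pos: "\<forall>x. p x > 0"
    and p_H2: "H2_loc p"
    and q_Cc1: "C_c 1 (q s)"
    and r_Cc2: "C_c 2 (r s)"
    and w1_weak: "\<forall>i. weak_deriv [i] (\<lambda>x. q s x $ i * p x) (w1 i)"
    and w2_weak: "\<forall>i j. weak_deriv [i, j] (\<lambda>x. r s x $ i $ j * p x) (w2 i j)"
    and v_def: "v = (\<lambda>x. ((- (\<Sum>i\<in>UNIV. w1 i x)) + 1/2 * (\<Sum>i\<in>UNIV. \<Sum>j\<in>UNIV. w2 i j x)) / p x)"
    and vt_meas: "vt \<in> borel_measurable lborel"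
    and vt_L1: "integrable (density lborel (\<lambda>x. ennreal (p x))) vt"
    and same_exp: "\<forall>f t. test_fun f \<longrightarrow> s < t \<longrightarrow> t \<le> T \<longrightarrow>
        (\<integral>\<omega>. f (X t \<omega>) * v (X s \<omega>) \<partial>M) = (\<integral>\<omega>. f (X t \<omega>) * vt (X s \<omega>) \<partial>M)"
  shows "AE x in lborel. v x = vt x"
proof -
  let ?\<mu> = "density lborel (\<lambda>x. ennreal (p x))"
  note paths = solves_martingale_problem_paths[OF sde]
  have "integrable lborel (w1 i)" for i
    by (rule integrable_weak_deriv_if_C_c_factor[OF w1_weak[rule_format] q_Cc1]) simp
  moreover have "integrable lborel (w2 i j)" for i j
    by (rule integrable_weak_deriv_if_C_c_factor[OF w2_weak[rule_format] r_Cc2]) simp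
  ultimately have v_int: "integrable ?\<mu> v"
    unfolding v_def using p_meas p_pos by (intro integrable_density_divide) auto
  then have v_meas: "v \<in> borel_measurable lborel"
    by (simp add: borel_measurable_integrable)
  have "(\<integral>x. bump n c d x * v x \<partial>?\<mu>) = (\<integral>x. bump n c d x * vt x \<partial>?\<mu>)" for n c d
  proof (rule integral_density_eq_at_left_endpoint[OF paths s_range p_density])
    show "continuous_on UNIV (bump n c d)" "\<And>x. \<bar>bump n c d x\<bar> \<le> 1"
      using test_fun_imp_continuous[OF test_fun_bump] bump_bounds[of n c d] by auto
  qed (use same_exp test_fun_bump v_int v_meas vt_L1 vt_meas in auto)
  then show ?thesis
    using p_meas vt_meas p_pos v_int v_meas vt_L1 by (intro AE_eq_if_density_bump_integrals_eq) auto
qed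

end
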